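(* Let $t > 0$. Let $(e,r)$ denote the element of $\mathcal{U}_t$ that is crossed last by $X$ during $[0,t]$, and let $p(e^+)$ denote the parent of $e^+$. Then, conditionally on $e^+\neq\phi$ and $H_{t,p(e^+)}<\infty$, almost surely $\mathcal{U}_t \setminus \mathcal{U}_{H_{t,p(e^+)}}$ contains at most two elements.
   Context: $G$ is an infinite rooted tree (root $\phi$) of uniformly bounded degree each of whose vertices has at least two offspring; the parent of a non-root vertex is its neighbour closer to $\phi$. For an edge $e$, $e^+$ is its endpoint closer to $\phi$ and $e^-$ the other. Fix $T>0$. A bar is $(e,h)\in E(G)\times[0,T)$ with joints $(e^+,h),(e^-,h)$. Under $\mathbb{P}_T$, $\mathcal{B}$ is a Poisson process of bars of intensity one w.r.t. counting $\times$ Lebesgue measure. The meander $X:[0,\infty)\to V(G)\times[0,T)$ starts at $(\phi,0)$, moves from $(v,h)$ as $t\mapsto(v,(h+t)\bmod T)$ until reaching a joint of a bar in $\mathcal{B}$, then jumps (crosses the bar) to the other joint and continues likewise; it is right-continuous with left limits. $Y$ is the projection of $X$ to $V(G)$. $H_A=\inf\{u\ge0:Y(u)\in A\}$, $H_{s,A}=\inf\{u\ge s:Y(u)\in A\}$ ($\inf\emptyset=\infty$), singletons written without braces. For $t>0$, $\mathcal{U}_t$ is the set of bars $(e,r)$ crossed by $X$ during $[0,t]$ such that: $H_{e^+}<H_{e^-}<t$; $\{u\in[0,t]:Y(u)=e^+\}=[H_{e^+},H_{e^-})$; $H_{e^-}-H_{e^+}\le T/2$; and $\{u\in[0,t):Y(u)=e^-\}$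 is an interval with right endpoint strictly less than $t$. *)

theory Defs
  imports "HOL-Probability.Probability"
begin

text \<open>The root is rt, par v is the parent of
a non-root vertex v (par rt = rt by convention). The edges of G are exactly the
pairs {par v, v} for v distinct from rt; we name such an edge by its far endpoint v,
so e^+ = par e and e^- = e.\<close>

definition rooted_tree :: "('v \<Rightarrow> 'v) \<Rightarrow> 'v \<Rightarrow> bool" where
  "rooted_tree par rt \<longleftrightarrow> par rt = rt \<and> (\<forall>v. \<exists>n. (par ^^ n) v = rt)"

definition children :: "('v \<Rightarrow> 'v) \<Rightarrow> 'v \<Rightarrow> 'v \<Rightarrow> 'v set" where
  "children par rt v = {w. w \<noteq> rt \<and> par w = v}"

definition bounded_degree :: "('v \<Rightarrow> 'v) \<Rightarrow> 'v \<Rightarrow> bool" where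
  "bounded_degree par rt \<longleftrightarrow>
     (\<exists>D::nat. \<forall>v. finite (children par rt v) \<and> card (children par rt v) \<le> D)"

definition at_least_two_offspring :: "('v \<Rightarrow> 'v) \<Rightarrow> 'v \<Rightarrow> bool" where
  "at_least_two_offspring par rt \<longleftrightarrow> (\<forall>v. infinite (children par rt v) \<or> card (children par rt v) \<ge> 2)"

text \<open>On each edge (named by its far endpoint v) the bars form a Poisson process of
intensity one on [0,T): a Poisson(T) number N of points, which are i.i.d. uniform on
[0,T). Edges are independent. A sample is omega :: 'v => nat * (nat => real).\<close>

definition edge_pp :: "real \<Rightarrow> (nat \<times> (nat \<Rightarrow> real)) measure" where
  "edge_pp T = measure_pmf (poisson_pmf T) \<Otimes>\<^sub>M
               (\<Pi>\<^sub>M i\<in>(UNIV::nat set). uniform_measure lborel {0..<T})"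

definition bar_measure :: "'v \<Rightarrow> real \<Rightarrow> ('v \<Rightarrow> nat \<times> (nat \<Rightarrow> real)) measure" where
  "bar_measure rt T = (\<Pi>\<^sub>M v\<in>(UNIV - {rt}). edge_pp T)"

text \<open>The set of bars (e,h): e names the edge {par e, e}, h the height.\<close>
definition bars :: "'v \<Rightarrow> ('v \<Rightarrow> nat \<times> (nat \<Rightarrow> real)) \<Rightarrow> ('v \<times> real) set" where
  "bars rt \<omega> = {(v, snd (\<omega> v) i) | v i. v \<noteq> rt \<and> i < fst (\<omega> v)}"

definition rmod :: "real \<Rightarrow> real \<Rightarrow> real" where
  "rmod x T = x - T * of_int \<lfloor>x / T\<rfloor>"

text \<open>Time needed (strictly positive) to move from height h up (mod T) to height h'.\<close>
definition hitdelay :: "real \<Rightarrow> real \<Rightarrow> real \<Rightarrow> real" where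
  "hitdelay T h h' = (if rmod (h' - h) T = 0 then T else rmod (h' - h) T)"

definition incident :: "('v \<Rightarrow> 'v) \<Rightarrow> ('v \<times> real) set \<Rightarrow> 'v \<Rightarrow> ('v \<times> real) set" where
  "incident par B v = {b \<in> B. fst b = v \<or> par (fst b) = v}"

definition other :: "('v \<Rightarrow> 'v) \<Rightarrow> 'v \<Rightarrow> 'v \<Rightarrow> 'v" where
  "other par v e = (if e = v then par e else e)"

text \<open>States: (vertex, height, time, bar crossed to get there). From (v,h,tau) the
meander moves up in height until the first joint of a bar at v, and crosses it.\<close>
type_synonym 'v mstate = "'v \<times> real \<times> real \<times> ('v \<times> real) option"

definition next_jump :: "('v \<Rightarrow> 'v) \<Rightarrow> real \<Rightarrow> ('v \<times> real) set \<Rightarrow> 'v mstate \<Rightarrow> 'v mstate option" where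
  "next_jump par T B st = (case st of (v, h, \<tau>, _) \<Rightarrow>
     (if \<exists>b\<in>incident par B v. \<forall>b'\<in>incident par B v. hitdelay T h (snd b) \<le> hitdelay T h (snd b')
      then (let b = (SOME b. b\<in>incident par B v \<and>
                        (\<forall>b'\<in>incident par B v. hitdelay T h (snd b) \<le> hitdelay T h (snd b')))
            in Some (other par v (fst b), snd b, \<tau> + hitdelay T h (snd b), Some b))
      else None))"

primrec jumps :: "('v \<Rightarrow> 'v) \<Rightarrow> 'v \<Rightarrow> real \<Rightarrow> ('v \<times> real) set \<Rightarrow> nat \<Rightarrow> 'v mstate option" where
  "jumps par rt T B 0 = Some (rt, 0, 0, None)"
| "jumps par rt T B (Suc k) =
     (case jumps par rt T B k of None \<Rightarrow> None | Some st \<Rightarrow> next_jump par T B st)"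

definition jtime :: "'v mstate option \<Rightarrow> real" where
  "jtime st = fst (snd (snd (the st)))"

text \<open>The meander X (right-continuous). On the (null) event of accumulation of
jump times, X is left unspecified after the accumulation point.\<close>
definition meander :: "('v \<Rightarrow> 'v) \<Rightarrow> 'v \<Rightarrow> real \<Rightarrow> ('v \<times> real) set \<Rightarrow> real \<Rightarrow> 'v \<times> real" where
  "meander par rt T B u =
     (let P = (\<lambda>k. jumps par rt T B k \<noteq> None \<and> jtime (jumps par rt T B k) \<le> u \<and>
                  (jumps par rt T B (Suc k) = None \<or> u < jtime (jumps par rt T B (Suc k))))
      in if \<exists>k. P k then
           (case the (jumps par rt T B (SOME k. P k)) of (v, h, \<tau>, _) \<Rightarrow> (v, rmod (h + (u - \<tau>)) T))
         else undefined)"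

definition Yproj :: "('v \<Rightarrow> 'v) \<Rightarrow> 'v \<Rightarrow> real \<Rightarrow> ('v \<times> real) set \<Rightarrow> real \<Rightarrow> 'v" where
  "Yproj par rt T B u = fst (meander par rt T B u)"

text \<open>Hitting times H_{s,A} (H_A = H_{0,A}), with inf of the empty set = infinity.\<close>
definition hit :: "('v \<Rightarrow> 'v) \<Rightarrow> 'v \<Rightarrow> real \<Rightarrow> ('v \<times> real) set \<Rightarrow> real \<Rightarrow> 'v set \<Rightarrow> ereal" where
  "hit par rt T B s A = Inf {ereal u | u. s \<le> u \<and> Yproj par rt T B u \<in> A}"

definition crossed_at :: "('v \<Rightarrow> 'v) \<Rightarrow> 'v \<Rightarrow> real \<Rightarrow> ('v \<times> real) set \<Rightarrow> real \<Rightarrow> nat \<Rightarrow> 'v \<times> real \<Rightarrow> bool" where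
  "crossed_at par rt T B t k b \<longleftrightarrow>
     (\<exists>v h \<tau>. jumps par rt T B k = Some (v, h, \<tau>, Some b) \<and> \<tau> \<le> t)"

definition Uset :: "('v \<Rightarrow> 'v) \<Rightarrow> 'v \<Rightarrow> real \<Rightarrow> ('v \<times> real) set \<Rightarrow> real \<Rightarrow> ('v \<times> real) set" where
  "Uset par rt T B t = {(e, r). (\<exists>k. crossed_at par rt T B t k (e, r)) \<and>
     (let Hp = hit par rt T B 0 {par e}; Hm = hit par rt T B 0 {e} in
        Hp < Hm \<and> Hm < ereal t \<and>
        {u. 0 \<le> u \<and> u \<le> t \<and> Yproj par rt T B u = par e} = {real_of_ereal Hp ..< real_of_ereal Hm} \<and>
        Hm - Hp \<le> ereal (T / 2) \<and>
        (let S = {u. 0 \<le> u \<and> u < t \<and> Yproj par rt T B u = e} in is_interval S \<and> Sup S < t))}"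

definition last_U :: "('v \<Rightarrow> 'v) \<Rightarrow> 'v \<Rightarrow> real \<Rightarrow> ('v \<times> real) set \<Rightarrow> real \<Rightarrow> 'v \<times> real \<Rightarrow> bool" where
  "last_U par rt T B t b \<longleftrightarrow> b \<in> Uset par rt T B t \<and>
     (\<exists>k. crossed_at par rt T B t k b \<and>
        (\<forall>k' b'. k < k' \<and> crossed_at par rt T B t k' b' \<longrightarrow> b' \<notin> Uset par rt T B t))"

end

theory Submission
  imports Defs
begin

text \<open>The bound holds for every configuration of bars, so no probability is involved.
  Once the meander first reaches the lower endpoint e' of an edge of \<open>U\<^sub>t\<close>, it cannot
  leave the subtree of e' before time t, because that would mean revisiting par e'. Hence all
  these subtrees contain the position at time t, so the edges of \<open>U\<^sub>t\<close> lie on one branch,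
  and the last-crossed edge e is the lowest of them. Between t and the hitting time of
  par (par e) the meander stays in the subtree of par e, so every edge of \<open>U\<^sub>t\<close> strictly
  above par e keeps all its defining properties: only the bars on e and on par e can be lost.\<close>

subsection \<open>Descendants in a rooted tree\<close>

definition descendants :: "('v \<Rightarrow> 'v) \<Rightarrow> 'v \<Rightarrow> 'v set" where
  "descendants par x = {w. \<exists>n. (par ^^ n) w = x}"

lemma self_in_descendants: "x \<in> descendants par x"
  by (auto simp: descendants_def intro: exI[of _ 0])

lemma child_in_descendants: "par w \<in> descendants par x \<Longrightarrow> w \<in> descendants par x"
proof -
  assume "par w \<in> descendants par x"
  then obtain n where n: "(par ^^ n) (par w) = x" by (auto simp: descendants_def)
  show ?thesis unfolding descendants_def mem_Collect_eq
    by (rule exI[of _ "Suc n"]) (simp only: funpow_Suc_right o_apply n)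
qed

lemma parent_in_descendants:
  assumes "w \<in> descendants par x" "w \<noteq> x"
  shows "par w \<in> descendants par x"
proof -
  obtain n where n: "(par ^^ n) w = x" using assms(1) by (auto simp: descendants_def)
  then obtain m where "n = Suc m" using assms(2) by (cases n) auto
  with n have "(par ^^ m) (par w) = x" by (simp add: funpow_Suc_right del: funpow.simps)
  thus ?thesis by (auto simp: descendants_def)
qed

lemma descendants_trans:
  assumes "w \<in> descendants par x" "x \<in> descendants par y"
  shows "w \<in> descendants par y"
proof -
  obtain n m where "(par ^^ n) w = x" "(par ^^ m) x = y" using assms by (auto simp: descendants_def)
  hence "(par ^^ (m + n)) w = y" by (simp add: funpow_add)
  thus ?thesis by (auto simp: descendants_def)
qed

lemma descendants_comparable:
  assumes "w \<in> descendants par a" "w \<in> descendants par b"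
  shows "a \<in> descendants par b \<or> b \<in> descendants par a"
proof -
  obtain n m where n: "(par ^^ n) w = a" and m: "(par ^^ m) w = b"
    using assms by (auto simp: descendants_def)
  show ?thesis
  proof (cases "n \<le> m")
    case True
    have "(par ^^ (m - n)) ((par ^^ n) w) = (par ^^ (m - n + n)) w"
      by (simp only: funpow_add o_apply)
    also have "\<dots> = b" using m True by simp
    finally have "(par ^^ (m - n)) ((par ^^ n) w) = b" .
    with n show ?thesis by (auto simp: descendants_def)
  next
    case False
    have "(par ^^ (n - m)) ((par ^^ m) w) = (par ^^ (n - m + m)) w"
      by (simp only: funpow_add o_apply)
    also have "\<dots> = a" using n False by simp
    finally have "(par ^^ (n - m)) ((par ^^ m) w) = a" .
    with m show ?thesis by (auto simp: descendants_def)
  qed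
qed

lemma rooted_tree_fixpoint: assumes "rooted_tree par rt" "par w = w" shows "w = rt"
proof -
  have "(par ^^ n) w = w" for n by (induction n) (use assms(2) in auto)
  moreover obtain n where "(par ^^ n) w = rt" using assms(1) unfolding rooted_tree_def by blast
  ultimately show ?thesis by simp
qed

lemma rooted_tree_funpow_root: "rooted_tree par rt \<Longrightarrow> (par ^^ n) rt = rt"
  by (induction n) (auto simp: rooted_tree_def)

lemma root_in_descendants: "rooted_tree par rt \<Longrightarrow> rt \<in> descendants par x \<Longrightarrow> x = rt"
  using rooted_tree_funpow_root by (fastforce simp: descendants_def)

lemma descendants_antisym:
  assumes tree: "rooted_tree par rt"
    and "x \<in> descendants par y" "y \<in> descendants par x"
  shows "x = y"
proof -
  obtain n m where n: "(par ^^ n) x = y" and m: "(par ^^ m) y = x"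
    using assms by (auto simp: descendants_def)
  show ?thesis
  proof (cases "m + n = 0")
    case True with n show ?thesis by simp
  next
    case False
    have cycle: "(par ^^ (m + n)) x = x" using n m by (simp add: funpow_add)
    have periodic: "(par ^^ (q * (m + n))) x = x" for q
      by (induction q) (use cycle in \<open>simp_all add: funpow_add\<close>)
    obtain d where d: "(par ^^ d) x = rt" using tree unfolding rooted_tree_def by blast
    have "d * 1 \<le> d * (m + n)" using False by (intro mult_left_mono) auto
    then obtain r where "d * (m + n) = r + d" using le_iff_add by (metis add.commute mult_1_right)
    hence "(par ^^ (d * (m + n))) x = rt"
      using d rooted_tree_funpow_root[OF tree] by (simp add: funpow_add)
    hence "x = rt" using periodic[of d] by (simp add: mult.commute)
    with n show ?thesis using rooted_tree_funpow_root[OF tree] by simp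
  qed
qed

lemma parent_notin_descendants:
  assumes tree: "rooted_tree par rt" and "v \<noteq> rt" "x \<in> descendants par v"
  shows "par v \<notin> descendants par x"
proof
  assume "par v \<in> descendants par x"
  hence "par v \<in> descendants par v" using assms(3) descendants_trans by metis
  moreover have "v \<in> descendants par (par v)" using child_in_descendants self_in_descendants by metis
  ultimately have "par v = v" using descendants_antisym[OF tree] by metis
  thus False using rooted_tree_fixpoint[OF tree] assms(2) by metis
qed

lemma rmod_nonneg: "T > 0 \<Longrightarrow> rmod x T \<ge> 0"
proof -
  assume T: "T > 0"
  have "T * of_int \<lfloor>x / T\<rfloor> \<le> T * (x / T)"
    using T by (intro mult_left_mono) (auto intro: of_int_floor_le)
  thus ?thesis using T by (simp add: rmod_def)
qed

lemma hitdelay_pos: "T > 0 \<Longrightarrow> hitdelay T h h' > 0"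
  using rmod_nonneg[of T "h' - h"] by (auto simp: hitdelay_def)

lemma next_jump_SomeD:
  assumes "next_jump par T B (v, h, \<tau>, ob) = Some st'"
  shows "\<exists>b\<in>incident par B v. st' = (other par v (fst b), snd b, \<tau> + hitdelay T h (snd b), Some b)"
proof -
  let ?first = "\<lambda>b. b \<in> incident par B v \<and>
    (\<forall>b'\<in>incident par B v. hitdelay T h (snd b) \<le> hitdelay T h (snd b'))"
  have ex: "\<exists>b\<in>incident par B v. \<forall>b'\<in>incident par B v. hitdelay T h (snd b) \<le> hitdelay T h (snd b')"
    using assms unfolding next_jump_def by (auto split: if_splits)
  hence "st' = (other par v (fst (SOME b. ?first b)), snd (SOME b. ?first b),
      \<tau> + hitdelay T h (snd (SOME b. ?first b)), Some (SOME b. ?first b))"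
    using assms unfolding next_jump_def Let_def by (simp only: prod.case if_P[OF ex]) auto
  moreover have "\<exists>b. ?first b" using ex by blast
  ultimately show ?thesis using someI_ex[of ?first] by blast
qed

lemma jumps_SucD:
  assumes "jumps par rt T B (Suc k) = Some st'"
  shows "\<exists>v h \<tau> ob. jumps par rt T B k = Some (v, h, \<tau>, ob) \<and>
     (\<exists>b\<in>incident par B v. st' = (other par v (fst b), snd b, \<tau> + hitdelay T h (snd b), Some b))"
proof (cases "jumps par rt T B k")
  case None with assms show ?thesis by simp
next
  case (Some st)
  obtain v h \<tau> ob where "st = (v, h, \<tau>, ob)" by (cases st) auto
  with assms Some next_jump_SomeD[of par T B v h \<tau> ob st'] show ?thesis by auto
qed

locale bar_configuration =
  fixes par :: "'v \<Rightarrow> 'v" and rt :: 'v and T :: real and B :: "('v \<times> real) set"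
  assumes tree: "rooted_tree par rt" and T_pos: "T > 0" and bars_off_root: "\<forall>b\<in>B. fst b \<noteq> rt"
begin

declare jumps.simps(2)[simp del]

abbreviation state :: "nat \<Rightarrow> 'v mstate option" where
  "state k \<equiv> jumps par rt T B k"

definition jump_vertex :: "nat \<Rightarrow> 'v" where
  "jump_vertex k = fst (the (state k))"

definition jump_time :: "nat \<Rightarrow> real" where
  "jump_time k = jtime (state k)"

abbreviation Y :: "real \<Rightarrow> 'v" where
  "Y \<equiv> Yproj par rt T B"

abbreviation H :: "real \<Rightarrow> 'v set \<Rightarrow> ereal" where
  "H s A \<equiv> hit par rt T B s A"

abbreviation U :: "real \<Rightarrow> ('v \<times> real) set" where
  "U t \<equiv> Uset par rt T B t"

definition in_sojourn :: "real \<Rightarrow> nat \<Rightarrow> bool" where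
  "in_sojourn u k \<longleftrightarrow> state k \<noteq> None \<and> jump_time k \<le> u \<and>
     (state (Suc k) = None \<or> u < jump_time (Suc k))"

text \<open>The meander is defined at time u unless u lies beyond an accumulation point of jump times.\<close>
definition meander_defined :: "real \<Rightarrow> bool" where
  "meander_defined u \<longleftrightarrow> (\<exists>k. in_sojourn u k)"

definition adjacent :: "'v \<Rightarrow> 'v \<Rightarrow> bool" where
  "adjacent a b \<longleftrightarrow> (b = par a \<and> a \<noteq> rt) \<or> (a = par b \<and> b \<noteq> rt)"

lemma jump_time_0: "jump_time 0 = 0"
  by (simp add: jump_time_def jtime_def)

lemma jump_vertex_0: "jump_vertex 0 = rt"
  by (simp add: jump_vertex_def)

lemma jump_step:
  assumes "state (Suc k) = Some (v', h', \<tau>', ob)"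
  shows "state k \<noteq> None \<and> jump_time k < jump_time (Suc k) \<and> jump_vertex (Suc k) = v' \<and>
    (\<exists>b\<in>B. ob = Some b \<and> ((jump_vertex k = fst b \<and> v' = par (fst b)) \<or>
                          (jump_vertex k = par (fst b) \<and> v' = fst b)))"
proof -
  obtain v h \<tau> ob0 b where Jk: "state k = Some (v, h, \<tau>, ob0)" and b: "b \<in> incident par B v"
    and st: "(v', h', \<tau>', ob) = (other par v (fst b), snd b, \<tau> + hitdelay T h (snd b), Some b)"
    using jumps_SucD[OF assms] by blast
  have "jump_time k < jump_time (Suc k)"
    using Jk assms st hitdelay_pos[OF T_pos, of h "snd b"] by (simp add: jump_time_def jtime_def)
  moreover have "b \<in> B" "fst b = v \<or> par (fst b) = v" using b by (auto simp: incident_def)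
  ultimately show ?thesis using Jk assms st by (auto simp: jump_vertex_def other_def)
qed

lemma jump_step_adjacent:
  assumes "state (Suc k) \<noteq> None"
  shows "adjacent (jump_vertex k) (jump_vertex (Suc k))"
proof -
  obtain v' h' \<tau>' ob where "state (Suc k) = Some (v', h', \<tau>', ob)"
    using assms by (cases "state (Suc k)") auto
  from jump_step[OF this] bars_off_root show ?thesis unfolding adjacent_def by auto
qed

lemma jump_time_Suc_less: "state (Suc k) \<noteq> None \<Longrightarrow> jump_time k < jump_time (Suc k)"
  using jump_step by (cases "state (Suc k)") auto

lemma state_not_None_le: "state k \<noteq> None \<Longrightarrow> j \<le> k \<Longrightarrow> state j \<noteq> None"
proof (induction k)
  case (Suc k) thus ?case by (metis jumps.simps(2) le_SucE option.simps(4))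
qed simp

lemma jump_time_strict_mono: "state k \<noteq> None \<Longrightarrow> j < k \<Longrightarrow> jump_time j < jump_time k"
proof (induction k)
  case (Suc k)
  have "state k \<noteq> None" using state_not_None_le Suc.prems by (metis le_SucI order_refl)
  with Suc jump_time_Suc_less show ?case by (metis less_SucE order.strict_trans)
qed simp

lemma jump_time_mono: "state k \<noteq> None \<Longrightarrow> j \<le> k \<Longrightarrow> jump_time j \<le> jump_time k"
  using jump_time_strict_mono by (metis le_less)

lemma jump_time_nonneg: "state k \<noteq> None \<Longrightarrow> 0 \<le> jump_time k"
  using jump_time_mono[of k 0] jump_time_0 by simp

lemma jump_path_leaves:
  assumes gate: "\<And>v w. v \<in> S \<Longrightarrow> w \<notin> S \<Longrightarrow> adjacent v w \<Longrightarrow> w = z"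
  shows "state j \<noteq> None \<Longrightarrow> i \<le> j \<Longrightarrow> jump_vertex i \<in> S \<Longrightarrow> jump_vertex j \<notin> S \<Longrightarrow>
    \<exists>m. i < m \<and> m \<le> j \<and> jump_vertex m = z"
proof (induction j)
  case (Suc j)
  show ?case
  proof (cases "i = Suc j")
    case False
    hence ij: "i \<le> j" using Suc by simp
    have Jj: "state j \<noteq> None" using Suc.prems state_not_None_le by (metis le_SucI order_refl)
    show ?thesis
    proof (cases "jump_vertex j \<in> S")
      case True
      with gate[OF _ Suc.prems(4) jump_step_adjacent[OF Suc.prems(1)]] ij show ?thesis
        by (intro exI[of _ "Suc j"]) auto
    next
      case False with Suc.IH[OF Jj ij Suc.prems(3)] show ?thesis by (meson le_SucI)
    qed
  qed (use Suc in simp)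
qed simp

subsection \<open>The continuous-time path\<close>

lemma in_sojourn_unique: "in_sojourn u k \<Longrightarrow> in_sojourn u k' \<Longrightarrow> k = k'"
proof -
  have False if "in_sojourn u k" "in_sojourn u k'" "k < k'" for k k'
  proof -
    have "state (Suc k) \<noteq> None" using that state_not_None_le[of k' "Suc k"] by (auto simp: in_sojourn_def)
    hence "u < jump_time (Suc k)" using that by (auto simp: in_sojourn_def)
    moreover have "jump_time (Suc k) \<le> jump_time k'"
      using jump_time_mono[of k' "Suc k"] that by (auto simp: in_sojourn_def)
    ultimately show False using that by (auto simp: in_sojourn_def)
  qed
  thus "in_sojourn u k \<Longrightarrow> in_sojourn u k' \<Longrightarrow> k = k'" by (metis linorder_neqE_nat)
qed

lemma meander_unfold:
  "(\<lambda>k. state k \<noteq> None \<and> jtime (state k) \<le> u \<and>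
      (state (Suc k) = None \<or> u < jtime (state (Suc k)))) = (\<lambda>k. in_sojourn u k)"
  by (auto simp: in_sojourn_def jump_time_def fun_eq_iff)

lemma Y_in_sojourn: assumes "in_sojourn u k" shows "Y u = jump_vertex k"
proof -
  have "(SOME k. in_sojourn u k) = k" using assms in_sojourn_unique by (metis someI_ex)
  with assms show ?thesis
    unfolding Yproj_def meander_def Let_def meander_unfold
    by (auto simp: jump_vertex_def split: prod.splits)
qed

lemma Y_undefined: "\<not> meander_defined u \<Longrightarrow> Y u = fst (undefined :: 'v \<times> real)"
  unfolding Yproj_def meander_def Let_def meander_unfold meander_defined_def by auto

lemma in_sojourn_state: "in_sojourn u k \<Longrightarrow> state k \<noteq> None"
  by (simp add: in_sojourn_def)

lemma in_sojourn_jump_time: "state k \<noteq> None \<Longrightarrow> in_sojourn (jump_time k) k"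
  using jump_time_Suc_less unfolding in_sojourn_def by blast

lemma Y_jump_time: "state k \<noteq> None \<Longrightarrow> Y (jump_time k) = jump_vertex k"
  using Y_in_sojourn in_sojourn_jump_time by blast

lemma Y_0: "Y 0 = rt"
  using Y_jump_time[of 0] jump_time_0 jump_vertex_0 by simp

lemma in_sojourn_before_jump:
  "state k \<noteq> None \<Longrightarrow> 0 \<le> u \<Longrightarrow> u < jump_time k \<Longrightarrow> \<exists>j<k. in_sojourn u j"
proof (induction k)
  case (Suc k)
  have Jk: "state k \<noteq> None" using Suc.prems state_not_None_le by (metis le_SucI order_refl)
  show ?case
  proof (cases "u < jump_time k")
    case True with Suc Jk show ?thesis by (meson less_SucI)
  next
    case False with Suc.prems Jk show ?thesis by (auto simp: in_sojourn_def)
  qed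
qed (simp add: jump_time_0)

lemma meander_defined_downward:
  assumes "meander_defined u" "0 \<le> u'" "u' \<le> u"
  shows "meander_defined u'"
proof -
  obtain k where k: "in_sojourn u k" using assms(1) by (auto simp: meander_defined_def)
  show ?thesis
  proof (cases "jump_time k \<le> u'")
    case True
    with k assms(3) have "in_sojourn u' k" unfolding in_sojourn_def by (meson le_less_trans)
    thus ?thesis unfolding meander_defined_def by blast
  next
    case False
    with in_sojourn_before_jump[OF in_sojourn_state[OF k] assms(2)] show ?thesis
      unfolding meander_defined_def by auto
  qed
qed

lemma in_sojourn_mono: "in_sojourn a i \<Longrightarrow> in_sojourn b j \<Longrightarrow> a \<le> b \<Longrightarrow> i \<le> j"
proof (rule ccontr)
  assume a: "in_sojourn a i" "in_sojourn b j" "a \<le> b" "\<not> i \<le> j"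
  hence "state (Suc j) \<noteq> None" using state_not_None_le[of i "Suc j"] by (auto simp: in_sojourn_def)
  hence "b < jump_time (Suc j)" using a by (auto simp: in_sojourn_def)
  moreover have "jump_time (Suc j) \<le> jump_time i"
    using jump_time_mono[of i "Suc j"] a by (auto simp: in_sojourn_def)
  ultimately show False using a by (auto simp: in_sojourn_def)
qed

lemma in_sojourn_before_later_jump:
  assumes "in_sojourn a i" "i < m" "state m \<noteq> None"
  shows "a < jump_time m"
proof -
  have "state (Suc i) \<noteq> None" using state_not_None_le assms by (metis Suc_leI)
  hence "a < jump_time (Suc i)" using assms(1) unfolding in_sojourn_def by metis
  also have "jump_time (Suc i) \<le> jump_time m" using jump_time_mono assms by (metis Suc_leI)
  finally show ?thesis .
qed

lemma jump_time_le_in_sojourn: "in_sojourn b j \<Longrightarrow> m \<le> j \<Longrightarrow> jump_time m \<le> b"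
  using jump_time_mono[of j m] by (auto simp: in_sojourn_def)

lemma Y_leaves:
  assumes gate: "\<And>v w. v \<in> S \<Longrightarrow> w \<notin> S \<Longrightarrow> adjacent v w \<Longrightarrow> w = z"
    and "meander_defined b" "0 \<le> a" "a \<le> b" "Y a \<in> S" "Y b \<notin> S"
  shows "\<exists>u. a < u \<and> u \<le> b \<and> Y u = z"
proof -
  obtain j where j: "in_sojourn b j" using assms by (auto simp: meander_defined_def)
  obtain i where i: "in_sojourn a i"
    using meander_defined_downward[OF assms(2-4)] by (auto simp: meander_defined_def)
  have "jump_vertex i \<in> S" "jump_vertex j \<notin> S"
    using assms(5,6) Y_in_sojourn[OF i] Y_in_sojourn[OF j] by auto
  then obtain m where m: "i < m" "m \<le> j" "jump_vertex m = z"
    using jump_path_leaves[of S z j i] gate in_sojourn_state[OF j] in_sojourn_mono[OF i j assms(4)]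
    by blast
  have Jm: "state m \<noteq> None" using state_not_None_le[OF in_sojourn_state[OF j]] m by simp
  show ?thesis
    using in_sojourn_before_later_jump[OF i m(1) Jm] jump_time_le_in_sojourn[OF j m(2)]
      Y_jump_time[OF Jm] m(3) by blast
qed

lemma adjacent_leaving_descendants:
  assumes v: "v \<in> descendants par x" and w: "w \<notin> descendants par x" and "adjacent v w"
  shows "w = par x"
proof -
  from \<open>adjacent v w\<close> consider "w = par v" | "v = par w" unfolding adjacent_def by blast
  thus ?thesis
  proof cases
    case 1
    have "v = x"
    proof (rule ccontr)
      assume "v \<noteq> x"
      with parent_in_descendants[OF v] 1 w show False by simp
    qed
    with 1 show ?thesis by simp
  next
    case 2 with child_in_descendants[of par w x] v w show ?thesis by simp
  qed
qed

lemma adjacent_entering_descendants: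
  assumes v: "v \<notin> descendants par x" and w: "w \<in> descendants par x" and "adjacent v w"
  shows "w = x"
proof -
  from \<open>adjacent v w\<close> consider "w = par v" | "v = par w" unfolding adjacent_def by blast
  thus ?thesis
  proof cases
    case 1 with child_in_descendants[of par v x] v w show ?thesis by simp
  next
    case 2
    show ?thesis
    proof (rule ccontr)
      assume "w \<noteq> x"
      with parent_in_descendants[OF w] 2 v show False by simp
    qed
  qed
qed

lemma Y_exits_descendants:
  assumes "meander_defined b" "0 \<le> a" "a \<le> b"
    and "Y a \<in> descendants par x" "Y b \<notin> descendants par x"
  shows "\<exists>u. a < u \<and> u \<le> b \<and> Y u = par x"
  by (rule Y_leaves[of "descendants par x" "par x", OF adjacent_leaving_descendants assms])

lemma Y_enters_descendants:
  assumes "meander_defined b" "0 \<le> a" "a \<le> b"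
    and "Y a \<notin> descendants par x" "Y b \<in> descendants par x"
  shows "\<exists>u. a < u \<and> u \<le> b \<and> Y u = x"
  using assms by (intro Y_leaves[of "- descendants par x" x, OF adjacent_entering_descendants]) auto

lemma Y_right_constant:
  assumes "0 \<le> h"
  shows "\<exists>M>h. \<forall>u. h \<le> u \<and> u < M \<longrightarrow> Y u = Y h"
proof (cases "meander_defined h")
  case True
  then obtain k where k: "in_sojourn h k" by (auto simp: meander_defined_def)
  define M where "M = (if state (Suc k) = None then h + 1 else jump_time (Suc k))"
  have "in_sojourn u k" if "h \<le> u" "u < M" for u
    using k that unfolding in_sojourn_def M_def by (auto split: if_splits)
  moreover have "h < M" using k by (auto simp: M_def in_sojourn_def)
  ultimately show ?thesis using Y_in_sojourn k by metis
next
  case False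
  have "\<not> meander_defined u" if "h \<le> u" for u
    using False meander_defined_downward[OF _ assms that] by blast
  with False show ?thesis using Y_undefined by (intro exI[of _ "h + 1"]) auto
qed

lemma hit_ge: "ereal s \<le> H s A"
  unfolding hit_def by (rule Inf_greatest) auto

lemma hit_le: "s \<le> u \<Longrightarrow> Y u \<in> A \<Longrightarrow> H s A \<le> ereal u"
  unfolding hit_def by (rule Inf_lower) auto

lemma not_hit_before: "H s A = ereal h \<Longrightarrow> s \<le> u \<Longrightarrow> u < h \<Longrightarrow> Y u \<notin> A"
  using hit_le by fastforce

lemma hit_attained:
  assumes "H s A = ereal h" "0 \<le> s"
  shows "s \<le> h \<and> Y h \<in> A"
proof -
  have sh: "s \<le> h" using hit_ge[of s A] assms by simp
  have "Y h \<in> A"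
  proof (rule ccontr)
    assume nA: "Y h \<notin> A"
    have "0 \<le> h" using sh assms(2) by simp
    then obtain M where M: "M > h" "\<forall>u. h \<le> u \<and> u < M \<longrightarrow> Y u = Y h"
      using Y_right_constant by blast
    have "M \<le> u" if "s \<le> u" "Y u \<in> A" for u
    proof (rule ccontr)
      assume "\<not> M \<le> u"
      moreover have "h \<le> u" using hit_le[OF that] assms(1) by simp
      ultimately have "Y u = Y h" using M(2) by (meson not_le)
      with nA that(2) show False by simp
    qed
    hence "ereal M \<le> H s A" unfolding hit_def by (intro Inf_greatest) auto
    with M assms show False by simp
  qed
  with sh show ?thesis by simp
qed

lemma meander_defined_before_hit:
  assumes "H s A = ereal h" "0 \<le> s" "s \<le> u" "u < h"
  shows "meander_defined u"
proof (rule ccontr)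
  assume nd: "\<not> meander_defined u"
  hence "\<not> meander_defined h" using meander_defined_downward assms by fastforce
  with nd have "Y u = Y h" using Y_undefined by simp
  thus False using not_hit_before[OF assms(1,3,4)] hit_attained[OF assms(1,2)] by simp
qed

lemma stays_in_descendants_before_parent_hit:
  assumes "H s {par x} = ereal h" "0 \<le> s" "Y s \<in> descendants par x" "s \<le> u" "u < h"
  shows "Y u \<in> descendants par x"
proof (rule ccontr)
  assume "Y u \<notin> descendants par x"
  with Y_exits_descendants[OF meander_defined_before_hit[OF assms(1,2,4,5)] assms(2,4,3)]
  obtain u' where "s < u'" "u' \<le> u" "Y u' = par x" by blast
  with not_hit_before[OF assms(1)] assms(5) show False by auto
qed

subsection \<open>The set \<open>U\<^sub>t\<close>\<close>

lemma U_mem: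
  "(e', r') \<in> U t \<longleftrightarrow> (\<exists>k. crossed_at par rt T B t k (e', r')) \<and>
     H 0 {par e'} < H 0 {e'} \<and> H 0 {e'} < ereal t \<and>
     {u. 0 \<le> u \<and> u \<le> t \<and> Y u = par e'} = {real_of_ereal (H 0 {par e'}) ..< real_of_ereal (H 0 {e'})} \<and>
     H 0 {e'} - H 0 {par e'} \<le> ereal (T / 2) \<and>
     is_interval {u. 0 \<le> u \<and> u < t \<and> Y u = e'} \<and> Sup {u. 0 \<le> u \<and> u < t \<and> Y u = e'} < t"
  by (simp add: Uset_def Let_def)

lemma crossed_atE:
  assumes "crossed_at par rt T B t k (e', r')"
  obtains k0 where "k = Suc k0" "state k \<noteq> None" "jump_time k \<le> t" "e' \<noteq> rt"
    "jump_vertex k0 = e' \<and> jump_vertex k = par e' \<or> jump_vertex k0 = par e' \<and> jump_vertex k = e'"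
proof -
  obtain v h \<tau> where Jk: "state k = Some (v, h, \<tau>, Some (e', r'))" and "\<tau> \<le> t"
    using assms by (auto simp: crossed_at_def)
  moreover obtain k0 where "k = Suc k0" using Jk by (cases k) auto
  moreover note jump_step[of k0 v h \<tau> "Some (e', r')"]
  ultimately show ?thesis using that bars_off_root by (auto simp: jump_time_def jtime_def)
qed

lemma U_memD:
  assumes "(e', r') \<in> U t"
  obtains hp hm where "H 0 {par e'} = ereal hp" "H 0 {e'} = ereal hm" "0 \<le> hp" "hp < hm" "hm < t"
    "\<And>u. 0 \<le> u \<Longrightarrow> u \<le> t \<Longrightarrow> Y u = par e' \<longleftrightarrow> hp \<le> u \<and> u < hm"
    "Y hm = e'" "e' \<noteq> rt"
proof -
  note M = assms[unfolded U_mem]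
  have "ereal 0 \<le> H 0 {par e'}" "ereal 0 \<le> H 0 {e'}" by (rule hit_ge)+
  then obtain hp hm where hp: "H 0 {par e'} = ereal hp" and hm: "H 0 {e'} = ereal hm"
    using M by (cases "H 0 {par e'}"; cases "H 0 {e'}") auto
  have "{u. 0 \<le> u \<and> u \<le> t \<and> Y u = par e'} = {hp ..< hm}" using M hp hm by simp
  hence "Y u = par e' \<longleftrightarrow> hp \<le> u \<and> u < hm" if "0 \<le> u" "u \<le> t" for u
    using that by (auto simp: set_eq_iff)
  moreover have "Y hm = e'" using hit_attained[OF hm] by simp
  moreover have "e' \<noteq> rt" using M crossed_atE by metis
  ultimately show ?thesis using that M hp hm \<open>ereal 0 \<le> H 0 {par e'}\<close> by auto
qed

lemma U_crossing_time:
  assumes U: "(e', r') \<in> U t" and c: "crossed_at par rt T B t k (e', r')"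
  shows "state k \<noteq> None \<and> H 0 {e'} = ereal (jump_time k)"
proof -
  obtain hp hm where hm: "H 0 {e'} = ereal hm"
    and par_visits: "\<And>u. 0 \<le> u \<Longrightarrow> u \<le> t \<Longrightarrow> Y u = par e' \<longleftrightarrow> hp \<le> u \<and> u < hm"
    using U_memD[OF U] by metis
  obtain k0 where k0: "k = Suc k0" and Jk: "state k \<noteq> None" and kt: "jump_time k \<le> t"
    and ends: "jump_vertex k0 = e' \<and> jump_vertex k = par e' \<or>
               jump_vertex k0 = par e' \<and> jump_vertex k = e'"
    using crossed_atE[OF c] by metis
  have Jk0: "state k0 \<noteq> None" and k0_less: "jump_time k0 < jump_time k"
    using k0 Jk state_not_None_le jump_time_Suc_less by auto
  have k0_nonneg: "0 \<le> jump_time k0" using jump_time_nonneg[OF Jk0] .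
  have before: "Y u = jump_vertex k0" if "jump_time k0 \<le> u" "u < jump_time k" for u
    using that k0 Jk0 by (intro Y_in_sojourn) (simp add: in_sojourn_def)
  have "jump_time k = hm"
  proof (cases "jump_vertex k0 = e'")
    case True
    hence "Y (jump_time k) = par e'" using ends Y_jump_time[OF Jk] by auto
    hence "jump_time k < hm" using par_visits k0_nonneg k0_less kt by auto
    moreover have "hm \<le> jump_time k0"
      using before[of "jump_time k0"] k0_less True not_hit_before[OF hm] k0_nonneg by force
    ultimately show ?thesis using k0_less by simp
  next
    case False
    hence ends': "jump_vertex k0 = par e'" "Y (jump_time k) = e'"
      using ends Y_jump_time[OF Jk] by auto
    have "0 \<le> jump_time k" using k0_nonneg k0_less by simp
    hence "hm \<le> jump_time k"
      using not_hit_before[OF hm, of "jump_time k"] ends'(2) by (meson not_le singletonI)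
    moreover have "\<not> hm < jump_time k"
    proof
      assume lt: "hm < jump_time k"
      let ?u = "max (jump_time k0) hm"
      have "Y ?u = par e'" using before[of ?u] lt k0_less ends' by simp
      moreover have "0 \<le> ?u" "?u \<le> t" using k0_nonneg k0_less lt kt by auto
      ultimately have "?u < hm" using par_visits by blast
      thus False by simp
    qed
    ultimately show ?thesis by simp
  qed
  thus ?thesis using hm Jk by simp
qed

lemma U_unique:
  assumes "(e', r1) \<in> U t" "(e', r2) \<in> U t"
  shows "r1 = r2"
proof -
  obtain k1 where k1: "crossed_at par rt T B t k1 (e', r1)" using assms U_mem by blast
  obtain k2 where k2: "crossed_at par rt T B t k2 (e', r2)" using assms U_mem by blast
  have "state k1 \<noteq> None" "state k2 \<noteq> None" "jump_time k1 = jump_time k2"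
    using U_crossing_time[OF assms(1) k1] U_crossing_time[OF assms(2) k2] by auto
  hence "k1 = k2" using jump_time_strict_mono by (metis linorder_neqE_nat less_irrefl)
  thus ?thesis using k1 k2 by (auto simp: crossed_at_def)
qed

lemma inj_on_fst_U: "inj_on fst (U t)"
  by (intro inj_onI) (metis U_unique prod.collapse)

lemma U_persists:
  assumes U: "(e', r') \<in> U t" and "t \<le> t'"
    and no_parent: "\<And>u. t < u \<Longrightarrow> u \<le> t' \<Longrightarrow> Y u \<noteq> par e'"
    and no_child: "\<And>u. t \<le> u \<Longrightarrow> u < t' \<Longrightarrow> Y u \<noteq> e'"
  shows "(e', r') \<in> U t'"
proof -
  note M = U[unfolded U_mem]
  have "{u. 0 \<le> u \<and> u \<le> t' \<and> Y u = par e'} = {u. 0 \<le> u \<and> u \<le> t \<and> Y u = par e'}"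
    using no_parent \<open>t \<le> t'\<close> by (auto, meson not_le)
  moreover have "{u. 0 \<le> u \<and> u < t' \<and> Y u = e'} = {u. 0 \<le> u \<and> u < t \<and> Y u = e'}"
  proof (rule Collect_cong)
    fix u show "(0 \<le> u \<and> u < t' \<and> Y u = e') = (0 \<le> u \<and> u < t \<and> Y u = e')"
      using no_child[of u] \<open>t \<le> t'\<close> by (cases "u < t") auto
  qed
  moreover have "\<exists>k. crossed_at par rt T B t' k (e', r')"
    using M \<open>t \<le> t'\<close> unfolding crossed_at_def by (meson order.trans)
  moreover have "H 0 {e'} < ereal t'" using M \<open>t \<le> t'\<close> by (meson ereal_less_eq(3) less_le_trans)
  ultimately show ?thesis unfolding U_mem using M \<open>t \<le> t'\<close> by auto
qed

text \<open>After first reaching e', the path cannot leave the subtree of e' before time t, since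
  leaving it means revisiting par e'.\<close>
lemma U_subtree_contains_position:
  assumes U: "(e', r') \<in> U t" and Dt: "meander_defined t"
  shows "Y t \<in> descendants par e'"
proof (rule ccontr)
  assume out: "Y t \<notin> descendants par e'"
  obtain hp hm where hp: "0 \<le> hp" "hp < hm" "hm < t" and Yhm: "Y hm = e'"
    and par_visits: "\<And>u. 0 \<le> u \<Longrightarrow> u \<le> t \<Longrightarrow> Y u = par e' \<longleftrightarrow> hp \<le> u \<and> u < hm"
    using U_memD[OF U] by metis
  have "Y hm \<in> descendants par e'" using Yhm self_in_descendants by metis
  with Y_exits_descendants[OF Dt _ _ this out] hp
  obtain u where "hm < u" "u \<le> t" "Y u = par e'" by auto
  with par_visits[of u] hp show False by auto
qed

lemma U_subtree_unvisited_before_hit: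
  assumes U: "(e', r') \<in> U t" and Dt: "meander_defined t"
    and hm: "H 0 {e'} = ereal hm" and "0 \<le> u" "u < hm"
  shows "Y u \<notin> descendants par e'"
proof
  assume "Y u \<in> descendants par e'"
  moreover have "Y 0 \<notin> descendants par e'"
    using Y_0 root_in_descendants[OF tree] U_memD[OF U] by metis
  moreover have "meander_defined u"
    using meander_defined_downward[OF Dt \<open>0 \<le> u\<close>] U_memD[OF U] hm assms(5)
    by (metis ereal.inject less_le order.strict_trans)
  ultimately obtain u' where "0 < u'" "u' \<le> u" "Y u' = e'"
    using Y_enters_descendants[of u 0] \<open>0 \<le> u\<close> by auto
  with not_hit_before[OF hm] assms(5) show False by auto
qed

lemma last_U_minimal:
  assumes last: "last_U par rt T B t (e, r)" and Dt: "meander_defined t"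
    and U: "(e', r') \<in> U t" and below: "e' \<in> descendants par e"
  shows "e' = e"
proof (rule ccontr)
  assume ne: "e' \<noteq> e"
  from last obtain k where eU: "(e, r) \<in> U t" and ck: "crossed_at par rt T B t k (e, r)"
    and later: "\<And>k' b'. k < k' \<Longrightarrow> crossed_at par rt T B t k' b' \<Longrightarrow> b' \<notin> U t"
    by (auto simp: last_U_def)
  obtain k' where ck': "crossed_at par rt T B t k' (e', r')" using U U_mem by blast
  have Jk: "state k \<noteq> None" and hm: "H 0 {e} = ereal (jump_time k)"
    using U_crossing_time[OF eU ck] by auto
  have Jk': "state k' \<noteq> None" and hm': "H 0 {e'} = ereal (jump_time k')"
    using U_crossing_time[OF U ck'] by auto
  have "Y (jump_time k) = e" "Y (jump_time k') = e'"
    using hit_attained[OF hm] hit_attained[OF hm'] by auto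
  hence "jump_time k \<noteq> jump_time k'" using ne by auto
  moreover have "\<not> jump_time k' < jump_time k"
    using U_subtree_unvisited_before_hit[OF eU Dt hm, of "jump_time k'"] jump_time_nonneg[OF Jk']
      \<open>Y (jump_time k') = e'\<close> below by auto
  ultimately have "jump_time k < jump_time k'" by simp
  hence "k < k'" using jump_time_mono[OF Jk, of k'] by (meson not_le order.strict_iff_not)
  with later ck' U show False by blast
qed

text \<open>All subtrees of elements of \<open>U\<^sub>t\<close> contain the current position, so their edges lie on
  one branch, and by minimality of the last one they all lie above it.\<close>
lemma last_U_below_U:
  assumes last: "last_U par rt T B t (e, r)" and Dt: "meander_defined t" and U: "(e', r') \<in> U t"
  shows "e \<in> descendants par e'"
proof -
  have "(e, r) \<in> U t" using last by (simp add: last_U_def)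
  hence "Y t \<in> descendants par e" "Y t \<in> descendants par e'"
    using U_subtree_contains_position Dt U by blast+
  with descendants_comparable last_U_minimal[OF last Dt U] self_in_descendants show ?thesis
    by metis
qed

text \<open>Until par x is hit, the path stays in the subtree of x and so cannot affect edges strictly
  above x.\<close>
lemma U_persists_until_parent_hit:
  assumes U: "(e', r') \<in> U t" and above: "x \<in> descendants par e'" "x \<noteq> e'"
    and h: "H t {par x} = ereal h" and "0 \<le> t" and Yt: "Y t \<in> descendants par x"
  shows "(e', r') \<in> U h"
proof -
  have th: "t \<le> h" and Yh: "Y h = par x" using hit_attained[OF h \<open>0 \<le> t\<close>] by auto
  have stay: "Y u \<in> descendants par x" if "t \<le> u" "u < h" for u
    using stays_in_descendants_before_parent_hit[OF h \<open>0 \<le> t\<close> Yt that] .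
  have e'_rt: "e' \<noteq> rt" using U_memD[OF U] by metis
  have px: "par x \<in> descendants par e'" using parent_in_descendants[OF above] .
  have "e' \<notin> descendants par x" using descendants_antisym[OF tree _ above(1)] above(2) by blast
  moreover have "par e' \<notin> descendants par (par x)"
    using parent_notin_descendants[OF tree e'_rt px] .
  moreover have "x \<in> descendants par (par x)"
    using child_in_descendants self_in_descendants by metis
  ultimately show ?thesis
    using U_persists[OF U th] stay Yh self_in_descendants descendants_trans
    by (metis le_less)
qed

lemma last_U_removed_card_le_2:
  assumes last: "last_U par rt T B t (e, r)" and "0 \<le> t" and h: "H t {par (par e)} = ereal h"
  shows "finite (U t - U h) \<and> card (U t - U h) \<le> 2"
proof (cases "h = t")
  case False
  hence "t < h" using hit_attained[OF h \<open>0 \<le> t\<close>] by simp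
  hence Dt: "meander_defined t" using meander_defined_before_hit[OF h \<open>0 \<le> t\<close>] by simp
  have "(e, r) \<in> U t" using last by (simp add: last_U_def)
  hence Yt: "Y t \<in> descendants par (par e)"
    using U_subtree_contains_position[OF _ Dt] descendants_trans child_in_descendants
      self_in_descendants by metis
  define S where "S = {b \<in> U t. fst b \<in> {e, par e}}"
  have removed: "U t - U h \<subseteq> S"
    unfolding S_def
    using last_U_below_U[OF last Dt] U_persists_until_parent_hit[OF _ _ _ h \<open>0 \<le> t\<close> Yt]
      parent_in_descendants by fastforce
  have inj: "inj_on fst S" using inj_on_fst_U[of t] by (rule inj_on_subset) (auto simp: S_def)
  have img: "fst ` S \<subseteq> {e, par e}" by (auto simp: S_def)
  have "finite S" using finite_imageD[OF finite_subset[OF img] inj] by simp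
  have "card S = card (fst ` S)" using card_image[OF inj] by simp
  also have "\<dots> \<le> card {e, par e}" using card_mono[OF _ img] by simp
  also have "\<dots> \<le> 2" by (simp add: card_insert_if)
  finally show ?thesis using removed \<open>finite S\<close> by (meson card_mono finite_subset order.trans)
qed simp

end

theorem lemma8:
  fixes par :: "'v \<Rightarrow> 'v" and rt :: 'v and T t :: real
  assumes "rooted_tree par rt"
    and "bounded_degree par rt"
    and "at_least_two_offspring par rt"
    and "T > 0" and "t > 0"
  shows "AE \<omega> in bar_measure rt T.
    \<forall>e r. last_U par rt T (bars rt \<omega>) t (e, r) \<and> par e \<noteq> rt \<and>
          hit par rt T (bars rt \<omega>) t {par (par e)} < \<infinity> \<longrightarrow>
          (let U' = Uset par rt T (bars rt \<omega>) t -
                    Uset par rt T (bars rt \<omega>) (real_of_ereal (hit par rt T (bars rt \<omega>) t {par (par e)}))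
           in finite U' \<and> card U' \<le> 2)"
proof (rule AE_I2)
  fix \<omega>
  interpret bar_configuration par rt T "bars rt \<omega>"
    using assms(1,4) by unfold_locales (auto simp: bars_def)
  show "\<forall>e r. last_U par rt T (bars rt \<omega>) t (e, r) \<and> par e \<noteq> rt \<and>
          H t {par (par e)} < \<infinity> \<longrightarrow>
          (let U' = U t - U (real_of_ereal (H t {par (par e)})) in finite U' \<and> card U' \<le> 2)"
  proof (intro allI impI)
    fix e r
    assume *: "last_U par rt T (bars rt \<omega>) t (e, r) \<and> par e \<noteq> rt \<and> H t {par (par e)} < \<infinity>"
    moreover have "ereal t \<le> H t {par (par e)}" by (rule hit_ge)
    ultimately obtain h where "H t {par (par e)} = ereal h" by (cases "H t {par (par e)}") auto
    with * last_U_removed_card_le_2[of t e r h] assms(5)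
    show "let U' = U t - U (real_of_ereal (H t {par (par e)})) in finite U' \<and> card U' \<le> 2"
      by simp
  qed
qed

end
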